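(* Fix $n$ and $p$. Among all categorial sequential allocation mechanisms (with any assignment of agents as optimistic or pessimistic), serial dictatorships with all agents optimistic have the smallest worst-case utilitarian rank, and they have the largest worst-case egalitarian rank (namely $n^p$).
   Context: Basic categorized domain: $n$ agents, $p$ categories $D_i=\{1,\ldots,n\}$ of indivisible items, bundles $\mathfrak D=D_1\times\cdots\times D_p$; each agent $j$ has a linear order $R_j$ over $\mathfrak D$; a profile is $P_n=(R_1,\ldots,R_n)$. $\mathrm{Rank}(R,\vec d)$ is the position of $\vec d$ in $R$ (top $=1$, bottom $=n^p$). CSAM $f_\mathcal O$: given a linear order $\mathcal O$ over $\{1,\ldots,n\}\times\{1,\ldots,p\}$, in rounds $t=1,\ldots,np$, if the $t$-th element of $\mathcal O$ is $(j,i)$ then agent $j$ chooses an item $d_{j,i}$ from $D_{i,t}$, the items of $D_i$ not yet chosen at the start of round $t$. Agent $j$ receives $f^j_\mathcal O(P_n)=(d_{j,1},\ldots,d_{j,p})$. Each agent is fixed in advance to be optimistic or pessimistic. When agent $j$ chooses from $D_i$ in round $t$, a bundle is available to her if for each category $l$ from which she has already chosen its $l$-th component equals $d_{j,l}$, and for each other category $l$ its $l$-th component lies in $D_{l,t}$. An optimistic agent chooses the $i$-th component of her top-ranked available bundle. A pessimistic agent chooses the $d\in D_{i,t}$ for which her lowest-ranked available bundle with $i$-th component $d$ is highest in $R_j$. A serial dictatorship CSAM is one where $\mathcal O=(j_1,1)\rhd(j_1,2)\rhd\cdots\rhd(j_1,p)\rhd\cdots\rhd(j_n,1)\rhd\cdots\rhd(j_n,p)$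 for some ordering $j_1,\ldots,j_n$ of the agents. For a CSAM with a given assignment of types, the worst-case utilitarian rank is $\max_{P_n}\sum_{j=1}^n\mathrm{Rank}(R_j,f^j_\mathcal O(P_n))$ and the worst-case egalitarian rank is $\max_{P_n}\max_{j}\mathrm{Rank}(R_j,f^j_\mathcal O(P_n))$, maxima over all profiles of $n$ agents. *)

theory Defs
  imports Main
begin

text \<open>Conventions: agents are 0..<n, categories are 0..<p, the items of every
category are 0..<n (shifted by one w.r.t. the paper). A bundle is a list of
length p whose l-th entry is the item from category l.  A linear order over
bundles is a list enumerating all bundles without repetition, best first.\<close>

definition bundles :: "nat \<Rightarrow> nat \<Rightarrow> nat list set" where
  "bundles n p = {b. length b = p \<and> (\<forall>l<p. b ! l < n)}"

definition is_linorder :: "nat \<Rightarrow> nat \<Rightarrow> nat list list \<Rightarrow> bool" where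
  "is_linorder n p R \<longleftrightarrow> distinct R \<and> set R = bundles n p"

definition rank :: "nat list list \<Rightarrow> nat list \<Rightarrow> nat" where
  "rank R b = Suc (LEAST k. k < length R \<and> R ! k = b)"

definition valid_profile :: "nat \<Rightarrow> nat \<Rightarrow> (nat \<Rightarrow> nat list list) \<Rightarrow> bool" where
  "valid_profile n p P \<longleftrightarrow> (\<forall>j<n. is_linorder n p (P j))"

definition valid_order :: "nat \<Rightarrow> nat \<Rightarrow> (nat \<times> nat) list \<Rightarrow> bool" where
  "valid_order n p Ord \<longleftrightarrow> distinct Ord \<and> set Ord = {0..<n} \<times> {0..<p}"

definition serial_dictatorship :: "nat \<Rightarrow> nat \<Rightarrow> (nat \<times> nat) list \<Rightarrow> bool" where
  "serial_dictatorship n p Ord \<longleftrightarrow>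
     (\<exists>js. distinct js \<and> set js = {0..<n} \<and>
           Ord = concat (map (\<lambda>j. map (\<lambda>i. (j, i)) [0..<p]) js))"

text \<open>Allocation state: a j i = Some d iff agent j has already chosen item d from category i.\<close>
type_synonym alloc = "nat \<Rightarrow> nat \<Rightarrow> nat option"

definition remaining :: "nat \<Rightarrow> alloc \<Rightarrow> nat \<Rightarrow> nat set" where
  "remaining n a i = {d. d < n \<and> (\<forall>j. a j i \<noteq> Some d)}"

definition available :: "nat \<Rightarrow> nat \<Rightarrow> alloc \<Rightarrow> nat \<Rightarrow> nat list set" where
  "available n p a j = {b \<in> bundles n p. \<forall>l<p.
      (case a j l of Some d \<Rightarrow> b ! l = d | None \<Rightarrow> b ! l \<in> remaining n a l)}"

definition choose_opt :: "nat \<Rightarrow> nat \<Rightarrow> nat list list \<Rightarrow> alloc \<Rightarrow> nat \<Rightarrow> nat \<Rightarrow> nat" where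
  "choose_opt n p R a j i = (ARG_MIN (rank R) b. b \<in> available n p a j) ! i"

definition choose_pess :: "nat \<Rightarrow> nat \<Rightarrow> nat list list \<Rightarrow> alloc \<Rightarrow> nat \<Rightarrow> nat \<Rightarrow> nat" where
  "choose_pess n p R a j i =
     (ARG_MIN (\<lambda>d. Max (rank R ` {b \<in> available n p a j. b ! i = d})) d. d \<in> remaining n a i)"

definition choose_item :: "nat \<Rightarrow> nat \<Rightarrow> (nat \<Rightarrow> bool) \<Rightarrow> nat list list \<Rightarrow> alloc \<Rightarrow> nat \<Rightarrow> nat \<Rightarrow> nat" where
  "choose_item n p opt R a j i =
     (if opt j then choose_opt n p R a j i else choose_pess n p R a j i)"

fun run :: "nat \<Rightarrow> nat \<Rightarrow> (nat \<Rightarrow> bool) \<Rightarrow> (nat \<Rightarrow> nat list list)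
            \<Rightarrow> (nat \<times> nat) list \<Rightarrow> alloc \<Rightarrow> alloc" where
  "run n p opt P [] a = a"
| "run n p opt P ((j, i) # os) a =
     run n p opt P os (a(j := (a j)(i := Some (choose_item n p opt (P j) a j i))))"

definition csam :: "nat \<Rightarrow> nat \<Rightarrow> (nat \<Rightarrow> bool) \<Rightarrow> (nat \<times> nat) list
                    \<Rightarrow> (nat \<Rightarrow> nat list list) \<Rightarrow> nat \<Rightarrow> nat list" where
  "csam n p opt Ord P j = map (\<lambda>i. the (run n p opt P Ord (\<lambda>_ _. None) j i)) [0..<p]"

definition wc_util :: "nat \<Rightarrow> nat \<Rightarrow> (nat \<Rightarrow> bool) \<Rightarrow> (nat \<times> nat) list \<Rightarrow> nat" where
  "wc_util n p opt Ord =
     Max {(\<Sum>j<n. rank (P j) (csam n p opt Ord P j)) | P. valid_profile n p P}"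

definition wc_egal :: "nat \<Rightarrow> nat \<Rightarrow> (nat \<Rightarrow> bool) \<Rightarrow> (nat \<times> nat) list \<Rightarrow> nat" where
  "wc_egal n p opt Ord =
     Max {Max {rank (P j) (csam n p opt Ord P j) | j. j < n} | P. valid_profile n p P}"

end

theory Submission
  imports Defs "HOL-Analysis.Convex"
begin

text \<open>Under an optimistic serial dictatorship the k-th dictator (counting from 0) faces
  (n - k)^p bundles that are still entirely free and takes her favourite one, so her rank is at
  most n^p + 1 - (n - k)^p. Conversely, for any mechanism and any types, let turn_pos Ord j l be
  the number of turns in category l that precede agent j's. Against the profile in which agent j
  ranks last, in increasing componentwise order, the bundles dominating
  (turn_pos Ord j 0, ..., turn_pos Ord j (p - 1)), every agent, optimistic or pessimistic, ends
  up with exactly this bundle, whose rank is n^p + 1 - \<Prod>l (n - turn_pos Ord j l). Each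
  turn_pos Ord _ l permutes the agents, so by AM-GM these products add up to at most
  \<Sum>k (n - k)^p, which compares the two worst cases. In the same profile the last serial
  dictator gets her bottom bundle, while no rank ever exceeds n^p.\<close>

section \<open>Bundles and ranks\<close>

lemma card_lists_nth_in:
  "card {b :: 'a list. length b = p \<and> (\<forall>l<p. b ! l \<in> X l)} = (\<Prod>l<p. card (X l))"
proof (induction p arbitrary: X)
  case 0
  then show ?case by simp
next
  case (Suc p)
  have eq: "{b :: 'a list. length b = Suc p \<and> (\<forall>l<Suc p. b ! l \<in> X l)}
      = (\<lambda>(x, xs). x # xs) ` (X 0 \<times> {b. length b = p \<and> (\<forall>l<p. b ! l \<in> X (Suc l))})"
  proof (rule set_eqI, rule iffI)
    fix b assume "b \<in> {b :: 'a list. length b = Suc p \<and> (\<forall>l<Suc p. b ! l \<in> X l)}"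
    then obtain x xs where "b = x # xs" "length xs = p" "\<forall>l<Suc p. b ! l \<in> X l"
      by (cases b) auto
    then show "b \<in> (\<lambda>(x, xs). x # xs) ` (X 0 \<times> {b. length b = p \<and> (\<forall>l<p. b ! l \<in> X (Suc l))})"
      by (auto intro!: image_eqI[where x = "(x, xs)"])
  qed (auto simp: less_Suc_eq_0_disj)
  have inj: "inj (\<lambda>(x :: 'a, xs). x # xs)" by (auto simp: inj_def)
  show ?case
    unfolding eq prod.lessThan_Suc_shift
    by (simp add: card_image[OF inj_on_subset[OF inj subset_UNIV]] card_cartesian_product Suc.IH
        del: prod.lessThan_Suc)
qed

lemma card_bundles: "card (bundles n p) = n ^ p"
proof -
  have "bundles n p = {b. length b = p \<and> (\<forall>l<p. b ! l \<in> {0..<n})}"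
    by (auto simp: bundles_def)
  then show ?thesis by (simp only: card_lists_nth_in) simp
qed

lemma set_n_lists_upt: "set (List.n_lists p [0..<n]) = bundles n p"
  unfolding set_n_lists bundles_def by (fastforce simp: in_set_conv_nth subset_iff)

lemma finite_bundles: "finite (bundles n p)"
  by (metis List.finite_set set_n_lists_upt)

lemma is_linorder_sort_key_n_lists: "is_linorder n p (sort_key f (List.n_lists p [0..<n]))"
  by (simp add: is_linorder_def set_n_lists_upt distinct_n_lists)

lemma valid_profile_n_lists: "valid_profile n p (\<lambda>_. List.n_lists p [0..<n])"
  using is_linorder_sort_key_n_lists[of n p "\<lambda>_. 0 :: nat"]
  by (simp add: valid_profile_def sort_key_const)

lemma length_linorder: "is_linorder n p R \<Longrightarrow> length R = n ^ p"
  by (metis card_bundles distinct_card is_linorder_def)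

lemma rank_nth:
  assumes "distinct R" "k < length R"
  shows "rank R (R ! k) = Suc k"
  unfolding rank_def
  by (rule arg_cong[where f = Suc], rule Least_equality) (use assms nth_eq_iff_index_eq in auto)

lemma rank_eq_Suc_index:
  assumes "distinct R" "b \<in> set R"
  obtains k where "k < length R" "R ! k = b" "rank R b = Suc k"
  by (metis assms in_set_conv_nth rank_nth)

lemma inj_on_rank: "distinct R \<Longrightarrow> inj_on (rank R) (set R)"
  by (metis inj_onI rank_eq_Suc_index Suc_inject)

lemma rank_in_range: "distinct R \<Longrightarrow> b \<in> set R \<Longrightarrow> rank R b \<in> {1..length R}"
  by (metis rank_eq_Suc_index atLeastAtMost_iff Suc_leI le_add1 plus_1_eq_Suc)

lemma card_add_rank_le:
  assumes R: "distinct R" and A: "A \<subseteq> set R" "c \<in> A"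
    and min: "\<And>b. b \<in> A \<Longrightarrow> rank R c \<le> rank R b"
  shows "card A + rank R c \<le> Suc (length R)"
proof -
  have "card A = card (rank R ` A)"
    using inj_on_subset[OF inj_on_rank[OF R] A(1)] by (simp add: card_image)
  also have "\<dots> \<le> card {rank R c..length R}"
    using A min rank_in_range[OF R] by (intro card_mono) force+
  moreover have "rank R c \<in> {1..length R}" using rank_in_range[OF R] A by blast
  ultimately show ?thesis by auto
qed

lemma card_less_rank:
  assumes R: "distinct R" and B: "B \<subseteq> set R" and c: "c \<in> set R"
    and above: "\<And>b. b \<in> B \<Longrightarrow> rank R b < rank R c"
  shows "card B < rank R c"
proof -
  have "card B = card (rank R ` B)"
    using inj_on_subset[OF inj_on_rank[OF R] B] by (simp add: card_image)
  also have "\<dots> \<le> card {1..<rank R c}"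
    using B above rank_in_range[OF R] by (intro card_mono) force+
  finally show ?thesis using rank_in_range[OF R c] by auto
qed

lemma rank_sort_key_less:
  assumes "distinct xs" "b \<in> set xs" "b' \<in> set xs" "f b < f b'"
  shows "rank (sort_key f xs) b < rank (sort_key f xs) b'"
proof -
  let ?R = "sort_key f xs"
  have R: "distinct ?R" using assms by simp
  obtain k where k: "k < length ?R" "?R ! k = b" "rank ?R b = Suc k"
    using rank_eq_Suc_index[OF R] assms(2) by (metis set_sort)
  obtain k' where k': "k' < length ?R" "?R ! k' = b'" "rank ?R b' = Suc k'"
    using rank_eq_Suc_index[OF R] assms(3) by (metis set_sort)
  have "\<not> k' \<le> k"
  proof
    assume "k' \<le> k"
    then have "f b' \<le> f b"
      using sorted_nth_mono[OF sorted_sort_key[of f xs]] k k' by fastforce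
    then show False using assms(4) by simp
  qed
  then show ?thesis using k k' by simp
qed

lemma arg_min_nat_eqI:
  fixes f :: "'a \<Rightarrow> nat"
  assumes "P k" "\<And>x. P x \<Longrightarrow> x \<noteq> k \<Longrightarrow> f k < f x"
  shows "arg_min f P = k"
  using arg_min_natI[of P k f] arg_min_nat_le[of P k f] assms by (metis leD)

section \<open>Runs of a mechanism\<close>

lemma run_append: "run n p opt P (xs @ ys) a = run n p opt P ys (run n p opt P xs a)"
  by (induction xs arbitrary: a) (auto split: prod.splits)

lemma run_snoc:
  "run n p opt P (xs @ [(j, i)]) a =
     (let b = run n p opt P xs a in b(j := (b j)(i := Some (choose_item n p opt (P j) b j i))))"
  by (simp add: run_append Let_def)

lemma run_unchanged: "(j, l) \<notin> set os \<Longrightarrow> run n p opt P os a j l = a j l"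
proof (induction os arbitrary: a)
  case (Cons x os)
  then show ?case by (cases x) auto
qed simp

definition partial_alloc :: "nat \<Rightarrow> alloc \<Rightarrow> (nat \<times> nat) list \<Rightarrow> bool" where
  "partial_alloc n a xs \<longleftrightarrow>
     (\<forall>j l. a j l \<noteq> None \<longleftrightarrow> (j, l) \<in> set xs) \<and> (\<forall>j l d. a j l = Some d \<longrightarrow> d < n)
     \<and> (\<forall>j j' l d. a j l = Some d \<longrightarrow> a j' l = Some d \<longrightarrow> j = j')"

lemma partial_alloc_None_iff: "partial_alloc n a xs \<Longrightarrow> a j l = None \<longleftrightarrow> (j, l) \<notin> set xs"
  unfolding partial_alloc_def by blast

lemma partial_alloc_less: "partial_alloc n a xs \<Longrightarrow> a j l = Some d \<Longrightarrow> d < n"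
  unfolding partial_alloc_def by blast

lemma card_remaining:
  assumes a: "partial_alloc n a xs"
  shows "card (remaining n a l) = n - card {j. (j, l) \<in> set xs}"
proof -
  let ?J = "{j. (j, l) \<in> set xs}"
  let ?item = "\<lambda>j. the (a j l)"
  have played: "j \<in> ?J \<longleftrightarrow> a j l = Some (?item j)" for j
    using a by (cases "a j l") (force simp: partial_alloc_def)+
  have "remaining n a l = {0..<n} - ?item ` ?J"
    unfolding remaining_def using played by (auto simp: image_iff) (metis option.sel)
  moreover have "inj_on ?item ?J"
    using a played unfolding partial_alloc_def by (intro inj_onI) metis
  moreover have "?item ` ?J \<subseteq> {0..<n}"
    using a played unfolding partial_alloc_def by auto
  moreover have "finite ?J"
    by (rule finite_subset[of _ "fst ` set xs"]) force+
  ultimately show ?thesis by (simp add: card_Diff_subset card_image finite_subset)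
qed

lemma remaining_nonempty:
  assumes a: "partial_alloc n a xs" and xs: "set xs \<subseteq> {0..<n} \<times> {0..<p}"
    and j: "j < n" and fresh: "(j, l) \<notin> set xs"
  shows "remaining n a l \<noteq> {}"
proof -
  have "card {j'. (j', l) \<in> set xs} \<le> card ({0..<n} - {j})"
    using xs fresh by (intro card_mono) auto
  also have "\<dots> < n" using j by simp
  finally show ?thesis using card_remaining[OF a, of l] by force
qed

lemma available_nonempty:
  assumes a: "partial_alloc n a xs" and rem: "\<forall>l<p. a j l = None \<longrightarrow> remaining n a l \<noteq> {}"
  shows "available n p a j \<noteq> {}"
proof -
  define b where
    "b = map (\<lambda>l. case a j l of Some d \<Rightarrow> d | None \<Rightarrow> (SOME d. d \<in> remaining n a l)) [0..<p]"
  have "b \<in> available n p a j"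
    unfolding available_def bundles_def
  proof (intro CollectI conjI allI impI)
    fix l assume l: "l < p"
    show "b ! l < n"
    proof (cases "a j l")
      case None
      then show ?thesis using rem l some_in_eq[of "remaining n a l"] by (simp add: b_def remaining_def)
    next
      case (Some d)
      then show ?thesis using a l by (simp add: b_def partial_alloc_def)
    qed
    show "case a j l of None \<Rightarrow> b ! l \<in> remaining n a l | Some d \<Rightarrow> b ! l = d"
      using rem l some_in_eq[of "remaining n a l"] by (simp add: b_def split: option.split)
  qed (simp add: b_def)
  then show ?thesis by auto
qed

lemma choose_item_remaining:
  assumes a: "partial_alloc n a xs" and xs: "set xs \<subseteq> {0..<n} \<times> {0..<p}"
    and ji: "j < n" "i < p" "(j, i) \<notin> set xs"
  shows "choose_item n p opt R a j i \<in> remaining n a i"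
proof -
  note none = partial_alloc_None_iff[OF a, of j]
  have rem: "\<forall>l<p. a j l = None \<longrightarrow> remaining n a l \<noteq> {}"
    using remaining_nonempty[OF a xs ji(1)] none by blast
  show ?thesis
  proof (cases "opt j")
    case True
    obtain b where "b \<in> available n p a j" using available_nonempty[OF a rem] by auto
    then have "(ARG_MIN (rank R) b. b \<in> available n p a j) \<in> available n p a j"
      by (rule arg_min_natI)
    then show ?thesis
      using True none[of i] ji by (force simp: choose_item_def choose_opt_def available_def)
  next
    case False
    obtain d where "d \<in> remaining n a i" using rem none ji by blast
    then show ?thesis
      using False arg_min_natI[of "\<lambda>d. d \<in> remaining n a i"]
      by (simp add: choose_item_def choose_pess_def)
  qed
qed

lemma partial_alloc_run:
  assumes "distinct xs" "set xs \<subseteq> {0..<n} \<times> {0..<p}"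
  shows "partial_alloc n (run n p opt P xs (\<lambda>_ _. None)) xs"
  using assms
proof (induction xs rule: rev_induct)
  case Nil
  then show ?case by (simp add: partial_alloc_def)
next
  case (snoc x xs)
  obtain j i where x: "x = (j, i)" by (cases x)
  let ?a = "run n p opt P xs (\<lambda>_ _. None)"
  have a: "partial_alloc n ?a xs" using snoc by auto
  have ji: "j < n" "i < p" "(j, i) \<notin> set xs" using snoc x by auto
  define c where "c = choose_item n p opt (P j) ?a j i"
  have "c \<in> remaining n ?a i"
    unfolding c_def by (rule choose_item_remaining[OF a _ ji]) (use snoc in auto)
  then have c: "c < n" "\<And>j'. ?a j' i \<noteq> Some c" by (auto simp: remaining_def)
  define a' where "a' = ?a(j := (?a j)(i := Some c))"
  have a': "a' j' l = (if (j', l) = (j, i) then Some c else ?a j' l)" for j' l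
    by (simp add: a'_def)
  have "partial_alloc n a' (xs @ [x])"
    unfolding partial_alloc_def
  proof (intro conjI allI impI)
    fix j' l
    show "a' j' l \<noteq> None \<longleftrightarrow> (j', l) \<in> set (xs @ [x])"
      using partial_alloc_None_iff[OF a, of j' l] by (auto simp: a' x)
  next
    fix j' l d assume "a' j' l = Some d"
    then show "d < n" using c partial_alloc_less[OF a] by (simp add: a' split: if_splits)
  next
    fix j1 j2 l d assume "a' j1 l = Some d" "a' j2 l = Some d"
    then show "j1 = j2"
      using c a unfolding partial_alloc_def by (simp add: a' split: if_splits)
  qed
  then show ?case by (simp only: x run_snoc c_def a'_def Let_def)
qed

lemma csam_in_bundles:
  assumes "valid_order n p Ord" "j < n"
  shows "csam n p opt Ord P j \<in> bundles n p"
proof -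
  have a: "partial_alloc n (run n p opt P Ord (\<lambda>_ _. None)) Ord"
    using assms(1) by (intro partial_alloc_run) (auto simp: valid_order_def)
  have "\<exists>d. run n p opt P Ord (\<lambda>_ _. None) j l = Some d \<and> d < n" if "l < p" for l
    using partial_alloc_None_iff[OF a, of j l] partial_alloc_less[OF a] assms that
    by (auto simp: valid_order_def)
  then show ?thesis by (fastforce simp: csam_def bundles_def)
qed

lemma rank_csam_le:
  assumes "valid_order n p Ord" "valid_profile n p P" "j < n"
  shows "rank (P j) (csam n p opt Ord P j) \<le> n ^ p"
proof -
  have "is_linorder n p (P j)" using assms by (simp add: valid_profile_def)
  then show ?thesis
    using rank_in_range[of "P j" "csam n p opt Ord P j"] csam_in_bundles[OF assms(1,3)]
      length_linorder by (auto simp: is_linorder_def)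
qed

section \<open>Serial dictatorships\<close>

lemma available_fresh:
  assumes "a j = (\<lambda>_. None)"
  shows "available n p a j = {b. length b = p \<and> (\<forall>l<p. b ! l \<in> remaining n a l)}"
  using assms by (auto simp: available_def bundles_def remaining_def)

lemma available_fix_prefix:
  fixes m :: nat
  assumes fresh: "a j = (\<lambda>_. None)" and c: "c \<in> available n p a j"
  defines "a' \<equiv> a(j := \<lambda>l. if l < m then Some (c ! l) else None)"
  shows "c \<in> available n p a' j" and "available n p a' j \<subseteq> available n p a j"
proof -
  have none: "a j l = None" for l using fresh by simp
  have same: "remaining n a' l = remaining n a l" if "\<not> l < m" for l
    using that by (auto simp: remaining_def a'_def) (metis none option.distinct(1))
  show "c \<in> available n p a' j"
    using c fresh same by (auto simp: available_def a'_def)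
  show "available n p a' j \<subseteq> available n p a j"
  proof
    fix b assume b: "b \<in> available n p a' j"
    have "b ! l \<in> remaining n a l" if "l < p" for l
    proof (cases "l < m")
      case True
      then have "b ! l = c ! l" using b that by (auto simp: available_def a'_def)
      then show ?thesis using c that fresh by (simp add: available_def)
    next
      case False
      then have "a' j l = None" by (simp add: a'_def)
      then show ?thesis using b that same[OF False] by (auto simp: available_def)
    qed
    then show "b \<in> available n p a j" using b fresh by (simp add: available_def)
  qed
qed

lemma card_available_fresh:
  assumes a: "partial_alloc n a xs" and fresh: "a j = (\<lambda>_. None)"
    and turns: "\<And>l. l < p \<Longrightarrow> card {j'. (j', l) \<in> set xs} = k"
  shows "card (available n p a j) = (n - k) ^ p"
  using card_remaining[OF a] turns
  by (simp add: available_fresh[where a = a and j = j, OF fresh] card_lists_nth_in)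

lemma run_turns_optimistic:
  assumes opt: "opt j" and fresh: "a j = (\<lambda>_. None)"
    and R: "distinct (P j)" "available n p a j \<subseteq> set (P j)"
    and c: "c \<in> available n p a j" "\<And>b. b \<in> available n p a j \<Longrightarrow> rank (P j) c \<le> rank (P j) b"
  shows "m \<le> p \<Longrightarrow>
    run n p opt P (map (\<lambda>i. (j, i)) [0..<m]) a = a(j := \<lambda>l. if l < m then Some (c ! l) else None)"
proof (induction m)
  case 0
  then show ?case using fresh by (auto intro!: ext)
next
  case (Suc m)
  define a' where "a' = a(j := \<lambda>l. if l < m then Some (c ! l) else None)"
  have c': "c \<in> available n p a' j" and sub: "available n p a' j \<subseteq> available n p a j"
    using available_fix_prefix[OF fresh c(1)] by (simp_all add: a'_def)
  have "(ARG_MIN (rank (P j)) b. b \<in> available n p a' j) = c"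
  proof (rule arg_min_nat_eqI[where P = "\<lambda>b. b \<in> available n p a' j", OF c'])
    fix b assume "b \<in> available n p a' j" "b \<noteq> c"
    then show "rank (P j) c < rank (P j) b"
      using c(2) sub c' R inj_on_rank[OF R(1)] by (metis inj_on_eq_iff le_neq_implies_less subsetD)
  qed
  then have choice: "choose_item n p opt (P j) a' j m = c ! m"
    using opt by (simp add: choose_item_def choose_opt_def)
  have IH: "run n p opt P (map (\<lambda>i. (j, i)) [0..<m]) a = a'"
    using Suc by (simp add: a'_def fun_upd_def)
  show ?case by (simp add: run_snoc IH Let_def choice) (auto simp: a'_def intro!: ext)
qed

lemma csam_optimistic_consecutive:
  fixes n p :: nat and opt :: "nat \<Rightarrow> bool" and P :: "nat \<Rightarrow> nat list list"
    and pre post :: "(nat \<times> nat) list"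
  defines "a \<equiv> run n p opt P pre (\<lambda>_ _. None)"
  assumes opt: "opt j" and fresh: "a j = (\<lambda>_. None)"
    and R: "distinct (P j)" "available n p a j \<subseteq> set (P j)"
    and c: "c \<in> available n p a j" "\<And>b. b \<in> available n p a j \<Longrightarrow> rank (P j) c \<le> rank (P j) b"
    and post: "\<And>i. (j, i) \<notin> set post"
  shows "csam n p opt (pre @ map (\<lambda>i. (j, i)) [0..<p] @ post) P j = c"
proof -
  have "length c = p" using c(1) by (simp add: available_def bundles_def)
  moreover have "run n p opt P (pre @ map (\<lambda>i. (j, i)) [0..<p] @ post) (\<lambda>_ _. None) j i = Some (c ! i)"
    if "i < p" for i
    using run_turns_optimistic[where opt = opt and j = j and a = a and P = P and m = p]
      opt fresh R c run_unchanged[OF post] that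
    by (simp add: run_append a_def)
  ultimately show ?thesis by (auto simp: csam_def intro: nth_equalityI)
qed

lemma rank_serial_dictator:
  assumes vo: "valid_order n p Osd" and js: "distinct js" "set js = {0..<n}"
    and Osd: "Osd = concat (map (\<lambda>j. map (\<lambda>i. (j, i)) [0..<p]) js)"
    and P: "valid_profile n p P" and k: "k < n"
  shows "rank (P (js ! k)) (csam n p (\<lambda>_. True) Osd P (js ! k)) + (n - k) ^ p \<le> n ^ p + 1"
proof -
  let ?turns = "\<lambda>j. map (\<lambda>i. (j, i)) [0..<p]"
  define j where "j = js ! k"
  define pre where "pre = concat (map ?turns (take k js))"
  define post where "post = concat (map ?turns (drop (Suc k) js))"
  define a where "a = run n p (\<lambda>_. True) P pre (\<lambda>_ _. None)"
  have "length js = n" using js distinct_card by fastforce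
  then have split: "js = take k js @ j # drop (Suc k) js"
    using k by (simp add: j_def id_take_nth_drop)
  have Osd_split: "Osd = pre @ ?turns j @ post"
    unfolding Osd pre_def post_def by (subst split) simp
  have "distinct (take k js @ j # drop (Suc k) js)" using js(1) split by metis
  then have j: "j \<notin> set (take k js)" "j \<notin> set (drop (Suc k) js)" by auto
  have "j < n" using k js(2) \<open>length js = n\<close> by (auto simp: j_def)
  have a: "partial_alloc n a pre"
    unfolding a_def using vo by (intro partial_alloc_run) (auto simp: valid_order_def Osd_split)
  have fresh: "a j = (\<lambda>_. None)"
    using partial_alloc_None_iff[OF a] j(1) by (auto simp: pre_def)
  have "card {j'. (j', l) \<in> set pre} = k" if "l < p" for l
  proof -
    have "{j'. (j', l) \<in> set pre} = set (take k js)" using that by (auto simp: pre_def image_iff)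
    then show ?thesis using js(1) k \<open>length js = n\<close> by (simp add: distinct_card)
  qed
  then have card_A: "card (available n p a j) = (n - k) ^ p"
    by (rule card_available_fresh[OF a fresh])
  then obtain b where "b \<in> available n p a j" using k by fastforce
  then obtain c where c: "c \<in> available n p a j"
      "\<And>b'. b' \<in> available n p a j \<Longrightarrow> rank (P j) c \<le> rank (P j) b'"
    using ex_has_least_nat[of "\<lambda>b. b \<in> available n p a j" b "rank (P j)"] by blast
  have lin: "is_linorder n p (P j)" using P \<open>j < n\<close> by (simp add: valid_profile_def)
  then have R: "distinct (P j)" "available n p a j \<subseteq> set (P j)"
    by (auto simp: is_linorder_def available_def)
  have "csam n p (\<lambda>_. True) Osd P j = c"
    unfolding Osd_split a_def
    by (rule csam_optimistic_consecutive) (use fresh R c j(2) in \<open>auto simp: a_def post_def\<close>)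
  then show ?thesis
    using card_add_rank_le[OF R(1,2) c] card_A length_linorder[OF lin]
    by (simp add: j_def)
qed

section \<open>The adversarial profile\<close>

definition first_pos :: "'a list \<Rightarrow> 'a \<Rightarrow> nat" where
  "first_pos xs y = length (takeWhile (\<lambda>x. x \<noteq> y) xs)"

lemma first_pos_nth: "y \<in> set xs \<Longrightarrow> first_pos xs y < length xs \<and> xs ! first_pos xs y = y"
  by (induction xs) (auto simp: first_pos_def)

lemma first_pos_append:
  "first_pos (xs @ ys) y = (if y \<in> set xs then first_pos xs y else length xs + first_pos ys y)"
  by (induction xs) (auto simp: first_pos_def)

lemma first_pos_Cons_self: "first_pos (y # ys) y = 0"
  by (simp add: first_pos_def)

lemma first_pos_map: "inj f \<Longrightarrow> first_pos (map f xs) (f y) = first_pos xs y"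
  by (induction xs) (auto simp: first_pos_def inj_eq)

lemma bij_betw_first_pos:
  assumes "distinct xs"
  shows "bij_betw (first_pos xs) (set xs) {..<length xs}"
proof -
  have inj: "inj_on (first_pos xs) (set xs)" by (metis first_pos_nth inj_onI)
  moreover have "first_pos xs ` set xs \<subseteq> {..<length xs}" using first_pos_nth by fastforce
  moreover have "card (first_pos xs ` set xs) = card {..<length xs}"
    using card_image[OF inj] distinct_card[OF assms] by simp
  ultimately show ?thesis by (simp add: bij_betw_def card_subset_eq)
qed

definition cat_turns :: "nat \<Rightarrow> (nat \<times> nat) list \<Rightarrow> (nat \<times> nat) list" where
  "cat_turns l xs = filter (\<lambda>x. snd x = l) xs"

text \<open>The item agent j receives from category l when every agent always takes the smallest
  remaining item.\<close>
definition turn_pos :: "(nat \<times> nat) list \<Rightarrow> nat \<Rightarrow> nat \<Rightarrow> nat" where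
  "turn_pos Ord j l = first_pos (cat_turns l Ord) (j, l)"

lemma bij_turn_pos:
  assumes "valid_order n p Ord" "l < p"
  shows "bij_betw (\<lambda>j. turn_pos Ord j l) {..<n} {..<n}"
proof -
  have turns: "set (cat_turns l Ord) = (\<lambda>j. (j, l)) ` {..<n}" "distinct (cat_turns l Ord)"
    using assms by (auto simp: cat_turns_def valid_order_def)
  have "length (cat_turns l Ord) = card ((\<lambda>j. (j, l)) ` {..<n})"
    using turns distinct_card by metis
  also have "\<dots> = n" by (simp add: card_image inj_on_def)
  finally have "bij_betw (first_pos (cat_turns l Ord)) ((\<lambda>j. (j, l)) ` {..<n}) {..<n}"
    using bij_betw_first_pos[OF turns(2)] turns(1) by simp
  moreover have "bij_betw (\<lambda>j. (j, l)) {..<n} ((\<lambda>j. (j, l)) ` {..<n})"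
    by (auto simp: bij_betw_def inj_on_def)
  ultimately have "bij_betw (first_pos (cat_turns l Ord) \<circ> (\<lambda>j. (j, l))) {..<n} {..<n}"
    by (intro bij_betw_trans)
  then show ?thesis by (simp add: turn_pos_def comp_def)
qed

lemma turn_pos_less: "valid_order n p Ord \<Longrightarrow> l < p \<Longrightarrow> j < n \<Longrightarrow> turn_pos Ord j l < n"
  using bij_betwE[OF bij_turn_pos] by blast

lemma turn_pos_prefix:
  "Ord = xs @ ys \<Longrightarrow> (j, l) \<in> set xs \<Longrightarrow> turn_pos Ord j l = first_pos (cat_turns l xs) (j, l)"
  by (simp add: turn_pos_def cat_turns_def first_pos_append)

lemma length_cat_turns_le_turn_pos:
  "Ord = xs @ ys \<Longrightarrow> (j, l) \<notin> set xs \<Longrightarrow> length (cat_turns l xs) \<le> turn_pos Ord j l"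
  by (simp add: turn_pos_def cat_turns_def first_pos_append)

lemma turn_pos_next:
  "Ord = xs @ (j, i) # ys \<Longrightarrow> (j, i) \<notin> set xs \<Longrightarrow> turn_pos Ord j i = length (cat_turns i xs)"
  by (simp add: turn_pos_def cat_turns_def first_pos_append first_pos_Cons_self)

text \<open>Sorting by this key puts the bundles dominating \<beta> componentwise below all other bundles
  and orders both groups by component sum, so the key is strictly monotone for the componentwise
  order.\<close>
definition adv_key :: "nat \<Rightarrow> nat \<Rightarrow> (nat \<Rightarrow> nat) \<Rightarrow> nat list \<Rightarrow> nat" where
  "adv_key n p \<beta> b = (if \<forall>l<p. \<beta> l \<le> b ! l then p * n else 0) + (\<Sum>l<p. b ! l)"

definition adv_profile :: "nat \<Rightarrow> nat \<Rightarrow> (nat \<times> nat) list \<Rightarrow> nat \<Rightarrow> nat list list" where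
  "adv_profile n p Ord j = sort_key (adv_key n p (turn_pos Ord j)) (List.n_lists p [0..<n])"

lemma valid_adv_profile: "valid_profile n p (adv_profile n p Ord)"
  by (simp add: valid_profile_def adv_profile_def is_linorder_sort_key_n_lists)

lemma adv_key_strict_mono:
  assumes "length b = p" "length b' = p" "\<forall>l<p. b ! l \<le> b' ! l" "b \<noteq> b'"
  shows "adv_key n p \<beta> b < adv_key n p \<beta> b'"
proof -
  have "\<not> (\<forall>l<p. b ! l = b' ! l)" using assms(1,2,4) nth_equalityI[of b b'] by auto
  then obtain l where "l < p" "b ! l < b' ! l" using assms(3) le_neq_implies_less by blast
  then have "(\<Sum>l<p. b ! l) < (\<Sum>l<p. b' ! l)"
    using assms(3) by (intro sum_strict_mono_ex1) auto
  moreover have "(\<forall>l<p. \<beta> l \<le> b ! l) \<longrightarrow> (\<forall>l<p. \<beta> l \<le> b' ! l)"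
    using assms(3) le_trans by blast
  ultimately show ?thesis by (auto simp: adv_key_def)
qed

lemma adv_key_undominated_less:
  assumes "b \<in> bundles n p" "\<not> (\<forall>l<p. \<beta> l \<le> b ! l)" "\<forall>l<p. \<beta> l \<le> b' ! l"
  shows "adv_key n p \<beta> b < adv_key n p \<beta> b'"
proof -
  have "{..<p} \<noteq> {}" using assms(2) by auto
  then have "(\<Sum>l<p. b ! l) < (\<Sum>l<p. n)"
    using assms(1) by (intro sum_strict_mono) (auto simp: bundles_def)
  moreover have "adv_key n p \<beta> b = (\<Sum>l<p. b ! l)" unfolding adv_key_def if_not_P[OF assms(2)] by simp
  moreover have "adv_key n p \<beta> b' = p * n + (\<Sum>l<p. b' ! l)" unfolding adv_key_def if_P[OF assms(3)] ..
  ultimately show ?thesis by simp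
qed

lemma rank_adv_key_less:
  assumes "b \<in> bundles n p" "b' \<in> bundles n p" "adv_key n p \<beta> b < adv_key n p \<beta> b'"
  shows "rank (sort_key (adv_key n p \<beta>) (List.n_lists p [0..<n])) b
       < rank (sort_key (adv_key n p \<beta>) (List.n_lists p [0..<n])) b'"
  using assms by (intro rank_sort_key_less) (simp_all add: distinct_n_lists set_n_lists_upt)

definition box :: "nat \<Rightarrow> (nat \<Rightarrow> nat) \<Rightarrow> (nat \<Rightarrow> nat) \<Rightarrow> nat list set" where
  "box p lo hi = {b. length b = p \<and> (\<forall>l<p. lo l \<le> b ! l \<and> b ! l \<le> hi l)}"

lemma box_subset_bundles: "\<forall>l<p. hi l < n \<Longrightarrow> box p lo hi \<subseteq> bundles n p"
  by (auto simp: box_def bundles_def intro: le_less_trans)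

lemma rank_adv_key_mono:
  assumes "b \<in> bundles n p" "b' \<in> bundles n p" "\<forall>l<p. b ! l \<le> b' ! l" "b \<noteq> b'"
  shows "rank (sort_key (adv_key n p \<beta>) (List.n_lists p [0..<n])) b
       < rank (sort_key (adv_key n p \<beta>) (List.n_lists p [0..<n])) b'"
  using assms by (intro rank_adv_key_less adv_key_strict_mono) (auto simp: bundles_def)

lemma choose_opt_box:
  assumes av: "available n p a j = box p lo hi" and bounds: "\<forall>l<p. lo l \<le> hi l \<and> hi l < n"
    and i: "i < p"
  shows "choose_opt n p (sort_key (adv_key n p \<beta>) (List.n_lists p [0..<n])) a j i = lo i"
proof -
  let ?R = "sort_key (adv_key n p \<beta>) (List.n_lists p [0..<n])"
  define v where "v = map lo [0..<p]"
  have v: "v \<in> available n p a j" using bounds by (auto simp: av v_def box_def)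
  have bundles: "available n p a j \<subseteq> bundles n p"
    using bounds by (simp add: av box_subset_bundles)
  have "(ARG_MIN (rank ?R) b. b \<in> available n p a j) = v"
  proof (rule arg_min_nat_eqI[where P = "\<lambda>b. b \<in> available n p a j", OF v])
    fix b assume "b \<in> available n p a j" "b \<noteq> v"
    then show "rank ?R v < rank ?R b"
      using v bundles by (intro rank_adv_key_mono) (auto simp: av box_def v_def)
  qed
  then show ?thesis using i by (simp add: choose_opt_def v_def)
qed

text \<open>The worst bundle with i-th component d is the upper corner with d in place i, and its rank
  increases with d.\<close>
lemma choose_pess_box:
  assumes av: "available n p a j = box p lo hi" and rem: "remaining n a i = {lo i..hi i}"
    and bounds: "\<forall>l<p. lo l \<le> hi l \<and> hi l < n" and i: "i < p"
  shows "choose_pess n p (sort_key (adv_key n p \<beta>) (List.n_lists p [0..<n])) a j i = lo i"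
proof -
  let ?R = "sort_key (adv_key n p \<beta>) (List.n_lists p [0..<n])"
  let ?worst = "\<lambda>d. Max (rank ?R ` {b \<in> available n p a j. b ! i = d})"
  define w where "w d = map (\<lambda>l. if l = i then d else hi l) [0..<p]" for d
  have bundles: "available n p a j \<subseteq> bundles n p"
    using bounds by (simp add: av box_subset_bundles)
  have w: "w d \<in> available n p a j" "w d ! i = d" if "d \<in> {lo i..hi i}" for d
    using bounds i that by (auto simp: av box_def w_def)
  have worst: "?worst d = rank ?R (w d)" if d: "d \<in> {lo i..hi i}" for d
  proof (rule Max_eqI)
    show "finite (rank ?R ` {b \<in> available n p a j. b ! i = d})"
      using finite_subset[OF bundles finite_bundles] by simp
    show "rank ?R (w d) \<in> rank ?R ` {b \<in> available n p a j. b ! i = d}"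
      using w[OF d] by blast
    fix r assume "r \<in> rank ?R ` {b \<in> available n p a j. b ! i = d}"
    then obtain b where b: "b \<in> available n p a j" "b ! i = d" "r = rank ?R b" by blast
    have "b = w d \<or> rank ?R b < rank ?R (w d)"
      using b w[OF d] bundles by (auto intro!: rank_adv_key_mono simp: av box_def w_def)
    then show "r \<le> rank ?R (w d)" using b(3) by auto
  qed
  have "(ARG_MIN ?worst d. d \<in> remaining n a i) = lo i"
  proof (rule arg_min_nat_eqI[where P = "\<lambda>d. d \<in> remaining n a i"])
    show "lo i \<in> remaining n a i" using rem bounds i by simp
    fix d assume "d \<in> remaining n a i" "d \<noteq> lo i"
    then have d: "d \<in> {lo i..hi i}" "lo i < d" using rem by auto
    have "rank ?R (w (lo i)) < rank ?R (w d)"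
      using w d bounds i bundles by (intro rank_adv_key_mono) (auto simp: w_def)
    then show "?worst (lo i) < ?worst d" using worst d bounds i by simp
  qed
  then show ?thesis by (simp add: choose_pess_def)
qed

lemma choose_item_box:
  assumes "available n p a j = box p lo hi" "remaining n a i = {lo i..hi i}"
    and "\<forall>l<p. lo l \<le> hi l \<and> hi l < n" "i < p"
  shows "choose_item n p opt (sort_key (adv_key n p \<beta>) (List.n_lists p [0..<n])) a j i = lo i"
  using choose_opt_box[OF assms(1,3,4)] choose_pess_box[OF assms] by (simp add: choose_item_def)

definition adv_state :: "(nat \<times> nat) list \<Rightarrow> (nat \<times> nat) list \<Rightarrow> alloc" where
  "adv_state Ord xs = (\<lambda>j l. if (j, l) \<in> set xs then Some (turn_pos Ord j l) else None)"

lemma remaining_adv_state: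
  assumes "distinct Ord" "Ord = xs @ ys"
  shows "remaining n (adv_state Ord xs) l = {length (cat_turns l xs)..<n}"
proof -
  let ?turns = "cat_turns l xs"
  have "distinct ?turns" using assms by (simp add: cat_turns_def)
  then have surj: "first_pos ?turns ` set ?turns = {..<length ?turns}"
    by (rule bij_betw_imp_surj_on[OF bij_betw_first_pos])
  have "(\<exists>j. adv_state Ord xs j l = Some d) \<longleftrightarrow> d \<in> first_pos ?turns ` set ?turns" for d
    using turn_pos_prefix[OF assms(2)] by (force simp: adv_state_def cat_turns_def image_iff)
  then have taken: "(\<exists>j. adv_state Ord xs j l = Some d) \<longleftrightarrow> d < length ?turns" for d
    using surj by auto
  have "d \<in> remaining n (adv_state Ord xs) l \<longleftrightarrow> length ?turns \<le> d \<and> d < n" for d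
    unfolding remaining_def using taken[of d] by auto
  then show ?thesis by (simp add: set_eq_iff)
qed

lemma available_adv_state:
  assumes vo: "valid_order n p Ord" and Ord: "Ord = xs @ ys" and j: "j < n"
  shows "available n p (adv_state Ord xs) j =
    box p (\<lambda>l. if (j, l) \<in> set xs then turn_pos Ord j l else length (cat_turns l xs))
          (\<lambda>l. if (j, l) \<in> set xs then turn_pos Ord j l else n - 1)"
proof -
  have rem: "remaining n (adv_state Ord xs) l = {length (cat_turns l xs)..<n}" for l
    using vo Ord by (intro remaining_adv_state) (auto simp: valid_order_def)
  let ?lo = "\<lambda>l. if (j, l) \<in> set xs then turn_pos Ord j l else length (cat_turns l xs)"
  let ?hi = "\<lambda>l. if (j, l) \<in> set xs then turn_pos Ord j l else n - 1"
  have component: "(x < n \<and> (case adv_state Ord xs j l of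
                       Some d \<Rightarrow> x = d | None \<Rightarrow> x \<in> remaining n (adv_state Ord xs) l))
      \<longleftrightarrow> ?lo l \<le> x \<and> x \<le> ?hi l" if "l < p" for l x
  proof (cases "(j, l) \<in> set xs")
    case True
    then show ?thesis using turn_pos_less[OF vo that j] by (auto simp: adv_state_def)
  next
    case False
    then have "adv_state Ord xs j l = None" by (simp add: adv_state_def)
    then show ?thesis using False j by (auto simp: rem)
  qed
  show ?thesis
  proof (rule set_eqI)
    fix b
    have "b \<in> available n p (adv_state Ord xs) j \<longleftrightarrow> length b = p \<and> (\<forall>l<p. b ! l < n \<and>
        (case adv_state Ord xs j l of
           Some d \<Rightarrow> b ! l = d | None \<Rightarrow> b ! l \<in> remaining n (adv_state Ord xs) l))"
      unfolding available_def bundles_def by auto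
    also have "\<dots> \<longleftrightarrow> b \<in> box p ?lo ?hi"
      unfolding box_def using component by simp
    finally show "b \<in> available n p (adv_state Ord xs) j \<longleftrightarrow> b \<in> box p ?lo ?hi" .
  qed
qed

lemma run_adv_profile:
  assumes vo: "valid_order n p Ord"
  shows "Ord = xs @ ys \<Longrightarrow> run n p opt (adv_profile n p Ord) xs (\<lambda>_ _. None) = adv_state Ord xs"
proof (induction xs arbitrary: ys rule: rev_induct)
  case Nil
  then show ?case by (auto simp: adv_state_def)
next
  case (snoc x xs)
  obtain j i where x: "x = (j, i)" by (cases x)
  have Ord: "Ord = xs @ (j, i) # ys" using snoc.prems x by simp
  have fresh: "(j, i) \<notin> set xs" using vo by (auto simp: valid_order_def Ord)
  have "(j, i) \<in> set Ord" using Ord by simp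
  then have ji: "j < n" "i < p" using vo by (auto simp: valid_order_def)
  define lo where "lo l = (if (j, l) \<in> set xs then turn_pos Ord j l else length (cat_turns l xs))" for l
  define hi where "hi l = (if (j, l) \<in> set xs then turn_pos Ord j l else n - 1)" for l
  have lo_i: "lo i = turn_pos Ord j i" using turn_pos_next[OF Ord fresh] fresh by (simp add: lo_def)
  have "\<forall>l<p. lo l \<le> hi l \<and> hi l < n"
    using length_cat_turns_le_turn_pos[OF Ord] turn_pos_less[OF vo _ ji(1)] ji(1)
    by (fastforce simp: lo_def hi_def)
  moreover have "remaining n (adv_state Ord xs) i = {lo i..hi i}"
    using remaining_adv_state[of Ord xs] vo Ord fresh ji by (auto simp: valid_order_def lo_def hi_def)
  moreover have "available n p (adv_state Ord xs) j = box p lo hi"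
    unfolding lo_def hi_def using available_adv_state[OF vo Ord ji(1)] by simp
  ultimately have "choose_item n p opt (adv_profile n p Ord j) (adv_state Ord xs) j i = turn_pos Ord j i"
    unfolding adv_profile_def lo_i[symmetric] using ji(2) by (intro choose_item_box)
  then show ?case
    using snoc.IH[of "(j, i) # ys"] Ord by (simp add: x run_snoc) (auto simp: adv_state_def intro!: ext)
qed

lemma csam_adv_profile:
  assumes vo: "valid_order n p Ord" and j: "j < n"
  shows "csam n p opt Ord (adv_profile n p Ord) j = map (turn_pos Ord j) [0..<p]"
  using run_adv_profile[OF vo, of Ord "[]"] vo j by (auto simp: csam_def adv_state_def valid_order_def)

text \<open>All bundles that do not dominate the received bundle are ranked above it.\<close>
lemma rank_adv_profile:
  assumes vo: "valid_order n p Ord" and j: "j < n"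
  shows "n ^ p + 1 \<le> rank (adv_profile n p Ord j) (csam n p opt Ord (adv_profile n p Ord) j)
                     + (\<Prod>l<p. n - turn_pos Ord j l)"
proof -
  let ?v = "map (turn_pos Ord j) [0..<p]"
  let ?R = "adv_profile n p Ord j"
  define S where "S = {b. length b = p \<and> (\<forall>l<p. b ! l \<in> {turn_pos Ord j l..<n})}"
  have card_S: "card S = (\<Prod>l<p. n - turn_pos Ord j l)"
    unfolding S_def card_lists_nth_in by simp
  have S: "S \<subseteq> bundles n p" by (auto simp: S_def bundles_def)
  have v: "?v \<in> bundles n p" using turn_pos_less[OF vo _ j] by (auto simp: bundles_def)
  have R: "distinct ?R" "set ?R = bundles n p"
    by (simp_all add: adv_profile_def distinct_n_lists set_n_lists_upt)
  have "rank ?R b < rank ?R ?v" if "b \<in> bundles n p - S" for b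
    using that v unfolding adv_profile_def
    by (intro rank_adv_key_less adv_key_undominated_less) (auto simp: S_def bundles_def)
  then have "card (bundles n p - S) < rank ?R ?v"
    using R v by (intro card_less_rank) auto
  moreover have "card (bundles n p - S) = n ^ p - card S"
    using S finite_bundles by (simp add: card_Diff_subset finite_subset card_bundles)
  moreover have "card S \<le> n ^ p"
    using S finite_bundles card_bundles card_mono by metis
  ultimately show ?thesis using csam_adv_profile[OF vo j] card_S by simp
qed

section \<open>Worst-case ranks\<close>

lemma prod_le_mean_of_powers:
  fixes y :: "nat \<Rightarrow> real"
  assumes p: "p \<ge> 1" and y: "\<And>l. y l \<ge> 0"
  shows "(\<Prod>l<p. y l) \<le> (\<Sum>l<p. y l ^ p) / p"
proof -
  have nonneg: "(\<Prod>l<p. y l) \<ge> 0" using y by (simp add: prod_nonneg)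
  have "(\<Prod>l<p. y l) = ((\<Prod>l<p. y l) ^ p) powr (1 / p)"
    using p nonneg by (simp add: powr_realpow'[symmetric] powr_powr)
  also have "\<dots> = (\<Prod>l<p. y l ^ p) powr (1 / card {..<p})"
    by (simp add: prod_power_distrib)
  also have "\<dots> \<le> (\<Sum>l<p. y l ^ p / card {..<p})"
    using p y by (intro arith_geom_mean) (auto simp: lessThan_empty_iff)
  finally show ?thesis by (simp add: sum_divide_distrib)
qed

lemma sum_prod_le_column_power_sum:
  fixes x :: "nat \<Rightarrow> nat \<Rightarrow> nat"
  assumes p: "p \<ge> 1" and T: "\<And>l. l < p \<Longrightarrow> (\<Sum>j<n. x j l ^ p) = T"
  shows "(\<Sum>j<n. \<Prod>l<p. x j l) \<le> T"
proof -
  have "real (\<Sum>j<n. \<Prod>l<p. x j l) = (\<Sum>j<n. \<Prod>l<p. real (x j l))"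
    by simp
  also have "\<dots> \<le> (\<Sum>j<n. (\<Sum>l<p. real (x j l) ^ p) / p)"
    by (intro sum_mono prod_le_mean_of_powers[OF p]) auto
  also have "\<dots> = (\<Sum>l<p. real (\<Sum>j<n. x j l ^ p)) / p"
    by (simp add: sum_divide_distrib[symmetric] sum.swap[of _ "{..<n}"])
  also have "\<dots> = T" using p T by simp
  finally show ?thesis by (simp only: of_nat_le_iff)
qed

lemma sum_power_turn_pos:
  assumes "valid_order n p Ord" "l < p"
  shows "(\<Sum>j<n. (n - turn_pos Ord j l) ^ p) = (\<Sum>k<n. (n - k) ^ p)"
  using sum.reindex_bij_betw[OF bij_turn_pos[OF assms], of "\<lambda>k. (n - k) ^ p"] by simp

lemma turn_pos_serial_dictatorship:
  assumes js: "distinct js" and l: "l < p" and k: "k < length js"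
  shows "turn_pos (concat (map (\<lambda>j. map (\<lambda>i. (j, i)) [0..<p]) js)) (js ! k) l = k"
proof -
  have "filter (\<lambda>i. i = l) [0..<q] = (if l < q then [l] else [])" for q
    by (induction q) auto
  then have "cat_turns l (concat (map (\<lambda>j. map (\<lambda>i. (j, i)) [0..<p]) js)) = map (\<lambda>j. (j, l)) js"
    using l by (induction js) (simp_all add: cat_turns_def filter_map comp_def)
  moreover have "first_pos (map (\<lambda>j. (j, l)) js) (js ! k, l) = first_pos js (js ! k)"
    by (rule first_pos_map) (simp add: inj_def)
  moreover have "first_pos js (js ! k) = k"
    using first_pos_nth[of "js ! k" js] nth_eq_iff_index_eq[OF js _ k] k by auto
  ultimately show ?thesis by (simp add: turn_pos_def)
qed

lemma Max_profiles_le: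
  fixes f :: "(nat \<Rightarrow> nat list list) \<Rightarrow> nat"
  assumes "\<And>P. valid_profile n p P \<Longrightarrow> f P \<le> b"
  shows "Max {f P | P. valid_profile n p P} \<le> b"
proof -
  have "finite {f P | P. valid_profile n p P}"
    unfolding finite_nat_set_iff_bounded_le using assms by blast
  moreover have "{f P | P. valid_profile n p P} \<noteq> {}"
    using valid_profile_n_lists by blast
  ultimately show ?thesis using assms by (auto simp: Max_le_iff)
qed

lemma le_Max_profiles:
  fixes f :: "(nat \<Rightarrow> nat list list) \<Rightarrow> nat"
  assumes "\<And>P. valid_profile n p P \<Longrightarrow> f P \<le> b" and "valid_profile n p Q"
  shows "f Q \<le> Max {f P | P. valid_profile n p P}"
proof -
  have "finite {f P | P. valid_profile n p P}"
    unfolding finite_nat_set_iff_bounded_le using assms(1) by blast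
  then show ?thesis using assms(2) by (auto intro: Max_ge)
qed

lemma sum_rank_csam_le:
  assumes "valid_order n p Ord" "valid_profile n p P"
  shows "(\<Sum>j<n. rank (P j) (csam n p opt Ord P j)) \<le> n * n ^ p"
proof -
  have "(\<Sum>j<n. rank (P j) (csam n p opt Ord P j)) \<le> (\<Sum>j<n. n ^ p)"
    by (intro sum_mono rank_csam_le[OF assms]) simp
  then show ?thesis by simp
qed

lemma Max_rank_csam_le:
  assumes "valid_order n p Ord" "valid_profile n p P" "n \<ge> 1"
  shows "Max {rank (P j) (csam n p opt Ord P j) | j. j < n} \<le> n ^ p"
proof -
  have "{rank (P j) (csam n p opt Ord P j) | j. j < n} = (\<lambda>j. rank (P j) (csam n p opt Ord P j)) ` {..<n}"
    by auto
  then show ?thesis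
    using rank_csam_le[OF assms(1,2)] assms(3) by (simp add: lessThan_empty_iff)
qed

lemma wc_util_ge:
  assumes vo: "valid_order n p Ord" and p: "p \<ge> 1"
  shows "n * (n ^ p + 1) - (\<Sum>k<n. (n - k) ^ p) \<le> wc_util n p opt Ord"
proof -
  let ?P = "adv_profile n p Ord"
  let ?util = "\<Sum>j<n. rank (?P j) (csam n p opt Ord ?P j)"
  have "n * (n ^ p + 1) = (\<Sum>j<n. n ^ p + 1)" by simp
  also have "\<dots> \<le> (\<Sum>j<n. rank (?P j) (csam n p opt Ord ?P j) + (\<Prod>l<p. n - turn_pos Ord j l))"
    by (intro sum_mono rank_adv_profile[OF vo]) simp
  also have "\<dots> \<le> ?util + (\<Sum>k<n. (n - k) ^ p)"
    using sum_prod_le_column_power_sum[where x = "\<lambda>j l. n - turn_pos Ord j l", OF p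
        sum_power_turn_pos[OF vo]]
    by (simp add: sum.distrib)
  finally have "n * (n ^ p + 1) - (\<Sum>k<n. (n - k) ^ p) \<le> ?util" by simp
  also have "?util \<le> wc_util n p opt Ord"
    unfolding wc_util_def by (rule le_Max_profiles[OF sum_rank_csam_le[OF vo] valid_adv_profile])
  finally show ?thesis .
qed

lemma wc_util_serial_dictatorship_le:
  assumes vo: "valid_order n p Osd" and sd: "serial_dictatorship n p Osd"
  shows "wc_util n p (\<lambda>_. True) Osd \<le> n * (n ^ p + 1) - (\<Sum>k<n. (n - k) ^ p)"
  unfolding wc_util_def
proof (rule Max_profiles_le)
  fix P assume P: "valid_profile n p P"
  let ?rank = "\<lambda>j. rank (P j) (csam n p (\<lambda>_. True) Osd P j)"
  obtain js where js: "distinct js" "set js = {0..<n}"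
    and Osd: "Osd = concat (map (\<lambda>j. map (\<lambda>i. (j, i)) [0..<p]) js)"
    using sd by (auto simp: serial_dictatorship_def)
  have "length js = n" using js distinct_card by fastforce
  then have "bij_betw ((!) js) {..<n} {..<n}"
    using js by (intro bij_betw_nth) (simp_all add: atLeast0LessThan)
  then have "(\<Sum>j<n. ?rank j) = (\<Sum>k<n. ?rank (js ! k))"
    by (rule sum.reindex_bij_betw[symmetric])
  also have "\<dots> \<le> n * (n ^ p + 1) - (\<Sum>k<n. (n - k) ^ p)"
  proof (rule add_le_imp_le_diff)
    have "(\<Sum>k<n. ?rank (js ! k)) + (\<Sum>k<n. (n - k) ^ p) = (\<Sum>k<n. ?rank (js ! k) + (n - k) ^ p)"
      by (rule sum.distrib[symmetric])
    also have "\<dots> \<le> (\<Sum>k<n. n ^ p + 1)"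
      by (intro sum_mono rank_serial_dictator[OF vo js Osd P]) simp
    finally show "(\<Sum>k<n. ?rank (js ! k)) + (\<Sum>k<n. (n - k) ^ p) \<le> n * (n ^ p + 1)"
      by simp
  qed
  finally show "(\<Sum>j<n. ?rank j) \<le> n * (n ^ p + 1) - (\<Sum>k<n. (n - k) ^ p)" .
qed

lemma wc_egal_le:
  assumes "valid_order n p Ord" "n \<ge> 1"
  shows "wc_egal n p opt Ord \<le> n ^ p"
  unfolding wc_egal_def using assms by (intro Max_profiles_le Max_rank_csam_le)

text \<open>Under the adversarial profile the last dictator is left with her bottom bundle.\<close>
lemma wc_egal_serial_dictatorship_ge:
  assumes vo: "valid_order n p Osd" and sd: "serial_dictatorship n p Osd" and n: "n \<ge> 1"
  shows "n ^ p \<le> wc_egal n p (\<lambda>_. True) Osd"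
proof -
  let ?P = "adv_profile n p Osd"
  let ?rank = "\<lambda>j. rank (?P j) (csam n p (\<lambda>_. True) Osd ?P j)"
  obtain js where js: "distinct js" "set js = {0..<n}"
    and Osd: "Osd = concat (map (\<lambda>j. map (\<lambda>i. (j, i)) [0..<p]) js)"
    using sd by (auto simp: serial_dictatorship_def)
  have "length js = n" using js distinct_card by fastforce
  define j where "j = js ! (n - 1)"
  have j: "j < n" using js n \<open>length js = n\<close> by (auto simp: j_def)
  have "turn_pos Osd j l = n - 1" if "l < p" for l
    unfolding Osd j_def using turn_pos_serial_dictatorship js(1) that n \<open>length js = n\<close> by simp
  then have "n ^ p \<le> ?rank j" using rank_adv_profile[OF vo j] n by simp
  also have "\<dots> \<le> Max {?rank j | j. j < n}"
    using j by (intro Max_ge) auto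
  also have "\<dots> \<le> wc_egal n p (\<lambda>_. True) Osd"
    unfolding wc_egal_def
    by (rule le_Max_profiles[OF Max_rank_csam_le[OF vo _ n] valid_adv_profile])
  finally show ?thesis .
qed

theorem proposition2:
  fixes n p :: nat and Osd Ord :: "(nat \<times> nat) list" and opt :: "nat \<Rightarrow> bool"
  assumes "n \<ge> 1" and "p \<ge> 1"
    and "valid_order n p Osd" and "serial_dictatorship n p Osd"
    and "valid_order n p Ord"
  shows "wc_util n p (\<lambda>_. True) Osd \<le> wc_util n p opt Ord
       \<and> wc_egal n p opt Ord \<le> wc_egal n p (\<lambda>_. True) Osd
       \<and> wc_egal n p (\<lambda>_. True) Osd = n ^ p"
proof -
  have "wc_util n p (\<lambda>_. True) Osd \<le> n * (n ^ p + 1) - (\<Sum>k<n. (n - k) ^ p)"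
    using assms(3,4) by (rule wc_util_serial_dictatorship_le)
  also have "\<dots> \<le> wc_util n p opt Ord"
    using assms(5,2) by (rule wc_util_ge)
  moreover have "wc_egal n p opt Ord \<le> n ^ p"
    using assms(5,1) by (rule wc_egal_le)
  moreover have "wc_egal n p (\<lambda>_. True) Osd = n ^ p"
    using wc_egal_le[OF assms(3,1)] wc_egal_serial_dictatorship_ge[OF assms(3,4,1)] by (rule antisym)
  ultimately show ?thesis by simp
qed

end
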